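(* Let $X$ be a reflexive complex Banach space, let $(\Omega,\mathcal{A},\mu)$ be a probability space, and let $\xi:\Omega\to X$ be weakly measurable, possessing a weak (Pettis) expectation with $\mathrm{E}\,\xi=\int_\Omega\xi\,d\mu=0$. Suppose that $D=\{f\in X^\ast:\int_\Omega|f(\xi)|^2\,d\mu<+\infty\}$ is dense in $X^\ast$, and define $t(f,g)=\mathrm{E}\big(f(\xi)\overline{g(\xi)}\big)=\int_\Omega f(\xi)\overline{g(\xi)}\,d\mu$ for $f,g\in D$. Then $t$ is a positive, closed, sesquilinear form on $D\times D$.
   Context: $X^\ast$ denotes the space of continuous conjugate-linear functionals on $X$. A positive sesquilinear form $t$ on a subspace $D$ of a normed space $Y$ (here $Y=X^\ast$) is called closed if whenever $f_n\in D$, $f_n\to f$ in $Y$ and $t(f_n-f_m,f_n-f_m)\to0$ as $n,m\to\infty$, then $f\in D$ and $t(f_n-f,f_n-f)\to0$. *)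

theory Defs
  imports "HOL-Analysis.Analysis" "HOL-Probability.Probability"
begin

text \<open>A complex Banach space is modelled as a real Banach space type 'a together
  with a complex scalar multiplication sc extending the real one, compatible with the norm.\<close>
definition complex_scaling :: "(complex \<Rightarrow> 'a::real_normed_vector \<Rightarrow> 'a) \<Rightarrow> bool" where
  "complex_scaling sc \<longleftrightarrow>
     (\<forall>r x. sc (complex_of_real r) x = r *\<^sub>R x) \<and>
     (\<forall>a b x. sc (a * b) x = sc a (sc b x)) \<and>
     (\<forall>a b x. sc (a + b) x = sc a x + sc b x) \<and>
     (\<forall>a x y. sc a (x + y) = sc a x + sc a y) \<and>
     (\<forall>a x. norm (sc a x) = cmod a * norm x)"

definition conj_dual :: "(complex \<Rightarrow> 'a::real_normed_vector \<Rightarrow> 'a) \<Rightarrow> ('a \<Rightarrow> complex) set" where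
  "conj_dual sc = {f. (\<forall>x y. f (x + y) = f x + f y) \<and>
                      (\<forall>c x. f (sc c x) = cnj c * f x) \<and>
                      (\<exists>K. \<forall>x. cmod (f x) \<le> K * norm x)}"

definition dual_norm :: "('a::real_normed_vector \<Rightarrow> complex) \<Rightarrow> real" where
  "dual_norm f = (SUP x\<in>{x. norm x \<le> 1}. cmod (f x))"

text \<open>Reflexivity: every continuous conjugate-linear functional on X^* is of the form
  f \<mapsto> conj (f x), i.e. the canonical embedding X \<rightarrow> X^** is surjective.\<close>
definition reflexive_space :: "(complex \<Rightarrow> 'a::real_normed_vector \<Rightarrow> 'a) \<Rightarrow> bool" where
  "reflexive_space sc \<longleftrightarrow>
     (\<forall>\<Phi> :: ('a \<Rightarrow> complex) \<Rightarrow> complex.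
        (\<forall>f\<in>conj_dual sc. \<forall>g\<in>conj_dual sc. \<Phi> (\<lambda>x. f x + g x) = \<Phi> f + \<Phi> g) \<and>
        (\<forall>c. \<forall>f\<in>conj_dual sc. \<Phi> (\<lambda>x. c * f x) = cnj c * \<Phi> f) \<and>
        (\<exists>K. \<forall>f\<in>conj_dual sc. cmod (\<Phi> f) \<le> K * dual_norm f)
      \<longrightarrow> (\<exists>x. \<forall>f\<in>conj_dual sc. \<Phi> f = cnj (f x)))"

definition sesquilinear_on :: "('b \<Rightarrow> complex) set \<Rightarrow> (('b \<Rightarrow> complex) \<Rightarrow> ('b \<Rightarrow> complex) \<Rightarrow> complex) \<Rightarrow> bool" where
  "sesquilinear_on D t \<longleftrightarrow>
     (\<forall>a b. \<forall>f\<in>D. \<forall>g\<in>D. (\<lambda>x. a * f x + b * g x) \<in> D) \<and>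
     (\<forall>a b. \<forall>f\<in>D. \<forall>g\<in>D. \<forall>h\<in>D. t (\<lambda>x. a * f x + b * g x) h = a * t f h + b * t g h) \<and>
     (\<forall>a b. \<forall>f\<in>D. \<forall>g\<in>D. \<forall>h\<in>D. t h (\<lambda>x. a * f x + b * g x) = cnj a * t h f + cnj b * t h g)"

definition positive_form :: "('b \<Rightarrow> complex) set \<Rightarrow> (('b \<Rightarrow> complex) \<Rightarrow> ('b \<Rightarrow> complex) \<Rightarrow> complex) \<Rightarrow> bool" where
  "positive_form D t \<longleftrightarrow> (\<forall>f\<in>D. Im (t f f) = 0 \<and> 0 \<le> Re (t f f))"

definition closed_form :: "(complex \<Rightarrow> 'a::real_normed_vector \<Rightarrow> 'a) \<Rightarrow> ('a \<Rightarrow> complex) set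
      \<Rightarrow> (('a \<Rightarrow> complex) \<Rightarrow> ('a \<Rightarrow> complex) \<Rightarrow> complex) \<Rightarrow> bool" where
  "closed_form sc D t \<longleftrightarrow>
     (\<forall>F f. (\<forall>n. F n \<in> D) \<and> f \<in> conj_dual sc \<and>
            (\<lambda>n. dual_norm (\<lambda>x. F n x - f x)) \<longlonglongrightarrow> 0 \<and>
            (\<forall>e>0. \<exists>N. \<forall>n\<ge>N. \<forall>m\<ge>N. cmod (t (\<lambda>x. F n x - F m x) (\<lambda>x. F n x - F m x)) < e)
        \<longrightarrow> f \<in> D \<and> (\<lambda>n. t (\<lambda>x. F n x - f x) (\<lambda>x. F n x - f x)) \<longlonglongrightarrow> 0)"

end

theory Submission
  imports Defs
begin

text \<open>The form t is the inner product of L^2(\<mu>) pulled back along f \<mapsto> f \<circ> \<xi>, and D is the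
  preimage of L^2(\<mu>), so positivity and sesquilinearity are inherited from L^2(\<mu>).
  For closedness, norm convergence f_n \<rightarrow> f in X^* gives pointwise convergence
  f_n(\<xi>(\<omega>)) \<rightarrow> f(\<xi>(\<omega>)), and by Fatou's lemma a sequence that is Cauchy in L^2 and
  converges pointwise converges in L^2 to its pointwise limit.\<close>

lemma borel_measurable_cnj [measurable]:
  "u \<in> borel_measurable M \<Longrightarrow> (\<lambda>x. cnj (u x)) \<in> borel_measurable M"
  by (rule borel_measurable_continuous_on[where f=cnj]) (auto intro: continuous_intros)

lemma square_integrable_iff_nn_integral_finite:
  fixes u :: "'w \<Rightarrow> complex"
  assumes "u \<in> borel_measurable M"
  shows "integrable M (\<lambda>\<omega>. (cmod (u \<omega>))\<^sup>2) \<longleftrightarrow> (\<integral>\<^sup>+\<omega>. ennreal ((cmod (u \<omega>))\<^sup>2) \<partial>M) < \<infinity>"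
proof
  assume "integrable M (\<lambda>\<omega>. (cmod (u \<omega>))\<^sup>2)"
  then have "(\<integral>\<^sup>+\<omega>. ennreal ((cmod (u \<omega>))\<^sup>2) \<partial>M) = ennreal (\<integral>\<omega>. (cmod (u \<omega>))\<^sup>2 \<partial>M)"
    by (intro nn_integral_eq_integral) auto
  then show "(\<integral>\<^sup>+\<omega>. ennreal ((cmod (u \<omega>))\<^sup>2) \<partial>M) < \<infinity>" by simp
qed (intro integrableI_bounded, use assms in auto)

lemma integrable_mult_cnj:
  fixes u v :: "'w \<Rightarrow> complex"
  assumes [measurable]: "u \<in> borel_measurable M" "v \<in> borel_measurable M"
    and "integrable M (\<lambda>\<omega>. (cmod (u \<omega>))\<^sup>2)" "integrable M (\<lambda>\<omega>. (cmod (v \<omega>))\<^sup>2)"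
  shows "integrable M (\<lambda>\<omega>. u \<omega> * cnj (v \<omega>))"
proof (rule Bochner_Integration.integrable_bound[of M "\<lambda>\<omega>. (cmod (u \<omega>))\<^sup>2 + (cmod (v \<omega>))\<^sup>2"])
  have "cmod (u \<omega>) * cmod (v \<omega>) \<le> (cmod (u \<omega>))\<^sup>2 + (cmod (v \<omega>))\<^sup>2" for \<omega>
    using sum_squares_bound[of "cmod (u \<omega>)" "cmod (v \<omega>)"] mult_nonneg_nonneg[OF norm_ge_zero norm_ge_zero, of "u \<omega>" "v \<omega>"]
    by linarith
  then show "AE \<omega> in M. norm (u \<omega> * cnj (v \<omega>)) \<le> norm ((cmod (u \<omega>))\<^sup>2 + (cmod (v \<omega>))\<^sup>2)"
    by (simp add: norm_mult)
qed (use assms in auto)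

lemma square_integrable_lincomb:
  fixes u v :: "'w \<Rightarrow> complex"
  assumes [measurable]: "u \<in> borel_measurable M" "v \<in> borel_measurable M"
    and "integrable M (\<lambda>\<omega>. (cmod (u \<omega>))\<^sup>2)" "integrable M (\<lambda>\<omega>. (cmod (v \<omega>))\<^sup>2)"
  shows "integrable M (\<lambda>\<omega>. (cmod (a * u \<omega> + b * v \<omega>))\<^sup>2)"
proof (rule Bochner_Integration.integrable_bound[of M
     "\<lambda>\<omega>. 2 * (cmod a)\<^sup>2 * (cmod (u \<omega>))\<^sup>2 + 2 * (cmod b)\<^sup>2 * (cmod (v \<omega>))\<^sup>2"])
  have "(cmod (a * u \<omega> + b * v \<omega>))\<^sup>2 \<le> 2 * (cmod a)\<^sup>2 * (cmod (u \<omega>))\<^sup>2 + 2 * (cmod b)\<^sup>2 * (cmod (v \<omega>))\<^sup>2"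
    for \<omega>
  proof -
    define p q where "p = cmod (a * u \<omega>)" and "q = cmod (b * v \<omega>)"
    have "cmod (a * u \<omega> + b * v \<omega>) \<le> p + q"
      unfolding p_def q_def by (rule norm_triangle_ineq)
    then have "(cmod (a * u \<omega> + b * v \<omega>))\<^sup>2 \<le> (p + q)\<^sup>2"
      by (intro power_mono) auto
    also have "\<dots> \<le> 2 * p\<^sup>2 + 2 * q\<^sup>2"
      using sum_squares_bound[of p q] by (simp add: power2_sum)
    finally show ?thesis
      unfolding p_def q_def by (simp add: norm_mult power_mult_distrib)
  qed
  then show "AE \<omega> in M. norm ((cmod (a * u \<omega> + b * v \<omega>))\<^sup>2) \<le>
      norm (2 * (cmod a)\<^sup>2 * (cmod (u \<omega>))\<^sup>2 + 2 * (cmod b)\<^sup>2 * (cmod (v \<omega>))\<^sup>2)"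
    by simp
qed (use assms in auto)

lemma nn_integral_sq_dist_le_of_tendsto:
  fixes u :: "nat \<Rightarrow> 'w \<Rightarrow> complex"
  assumes [measurable]: "\<And>m. u m \<in> borel_measurable M" "w \<in> borel_measurable M"
    and lim: "\<And>\<omega>. (\<lambda>m. u m \<omega>) \<longlonglongrightarrow> v \<omega>"
    and bound: "eventually (\<lambda>m. (\<integral>\<^sup>+\<omega>. ennreal ((cmod (w \<omega> - u m \<omega>))\<^sup>2) \<partial>M) \<le> c) sequentially"
  shows "(\<integral>\<^sup>+\<omega>. ennreal ((cmod (w \<omega> - v \<omega>))\<^sup>2) \<partial>M) \<le> c"
proof -
  have "(\<integral>\<^sup>+\<omega>. ennreal ((cmod (w \<omega> - v \<omega>))\<^sup>2) \<partial>M) =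
        (\<integral>\<^sup>+\<omega>. liminf (\<lambda>m. ennreal ((cmod (w \<omega> - u m \<omega>))\<^sup>2)) \<partial>M)"
  proof (rule nn_integral_cong)
    fix \<omega>
    have "(\<lambda>m. ennreal ((cmod (w \<omega> - u m \<omega>))\<^sup>2)) \<longlonglongrightarrow> ennreal ((cmod (w \<omega> - v \<omega>))\<^sup>2)"
      by (intro tendsto_ennrealI tendsto_intros lim)
    then show "ennreal ((cmod (w \<omega> - v \<omega>))\<^sup>2) = liminf (\<lambda>m. ennreal ((cmod (w \<omega> - u m \<omega>))\<^sup>2))"
      by (metis lim_imp_Liminf sequentially_bot)
  qed
  also have "\<dots> \<le> liminf (\<lambda>m. \<integral>\<^sup>+\<omega>. ennreal ((cmod (w \<omega> - u m \<omega>))\<^sup>2) \<partial>M)"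
    by (rule nn_integral_liminf) measurable
  also have "\<dots> \<le> limsup (\<lambda>m. \<integral>\<^sup>+\<omega>. ennreal ((cmod (w \<omega> - u m \<omega>))\<^sup>2) \<partial>M)"
    by (rule Liminf_le_Limsup) simp
  also have "\<dots> \<le> c"
    by (rule Limsup_bounded[OF bound])
  finally show ?thesis .
qed

lemma nn_integral_sq_dist_le_of_Cauchy:
  fixes u :: "nat \<Rightarrow> 'w \<Rightarrow> complex"
  assumes meas [measurable]: "\<And>n. u n \<in> borel_measurable M"
    and square_integrable: "\<And>n. integrable M (\<lambda>\<omega>. (cmod (u n \<omega>))\<^sup>2)"
    and lim: "\<And>\<omega>. (\<lambda>n. u n \<omega>) \<longlonglongrightarrow> v \<omega>"
    and Cauchy: "\<forall>n\<ge>N. \<forall>m\<ge>N. (\<integral>\<omega>. (cmod (u n \<omega> - u m \<omega>))\<^sup>2 \<partial>M) < e"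
    and "n \<ge> N"
  shows "(\<integral>\<^sup>+\<omega>. ennreal ((cmod (u n \<omega> - v \<omega>))\<^sup>2) \<partial>M) \<le> ennreal e"
proof (rule nn_integral_sq_dist_le_of_tendsto[OF meas _ lim])
  have "(\<integral>\<^sup>+\<omega>. ennreal ((cmod (u n \<omega> - u m \<omega>))\<^sup>2) \<partial>M) \<le> ennreal e" if "m \<ge> N" for m
  proof -
    have "(\<integral>\<^sup>+\<omega>. ennreal ((cmod (u n \<omega> - u m \<omega>))\<^sup>2) \<partial>M) =
          ennreal (\<integral>\<omega>. (cmod (u n \<omega> - u m \<omega>))\<^sup>2 \<partial>M)"
      using square_integrable_lincomb[OF meas meas square_integrable square_integrable, of 1 n "-1" m]
      by (intro nn_integral_eq_integral) auto
    also have "\<dots> \<le> ennreal e"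
      using Cauchy \<open>n \<ge> N\<close> that by (intro ennreal_leI less_imp_le) blast
    finally show ?thesis .
  qed
  then show "\<forall>\<^sub>F m in sequentially. (\<integral>\<^sup>+\<omega>. ennreal ((cmod (u n \<omega> - u m \<omega>))\<^sup>2) \<partial>M) \<le> ennreal e"
    unfolding eventually_sequentially by blast
qed measurable

lemma square_integrable_Cauchy_tendsto:
  fixes u :: "nat \<Rightarrow> 'w \<Rightarrow> complex"
  assumes meas [measurable]: "\<And>n. u n \<in> borel_measurable M"
    and square_integrable: "\<And>n. integrable M (\<lambda>\<omega>. (cmod (u n \<omega>))\<^sup>2)"
    and lim: "\<And>\<omega>. (\<lambda>n. u n \<omega>) \<longlonglongrightarrow> v \<omega>"
    and Cauchy: "\<And>e. e > 0 \<Longrightarrow> \<exists>N. \<forall>n\<ge>N. \<forall>m\<ge>N. (\<integral>\<omega>. (cmod (u n \<omega> - u m \<omega>))\<^sup>2 \<partial>M) < e"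
  shows "integrable M (\<lambda>\<omega>. (cmod (v \<omega>))\<^sup>2)"
    and "(\<lambda>n. \<integral>\<omega>. (cmod (u n \<omega> - v \<omega>))\<^sup>2 \<partial>M) \<longlonglongrightarrow> 0"
proof -
  have v_meas [measurable]: "v \<in> borel_measurable M"
    by (rule borel_measurable_LIMSEQ_metric[OF meas lim])
  have close: "\<exists>N. \<forall>n\<ge>N. (\<integral>\<^sup>+\<omega>. ennreal ((cmod (u n \<omega> - v \<omega>))\<^sup>2) \<partial>M) \<le> ennreal e"
    if "e > 0" for e
  proof -
    obtain N where "\<forall>n\<ge>N. \<forall>m\<ge>N. (\<integral>\<omega>. (cmod (u n \<omega> - u m \<omega>))\<^sup>2 \<partial>M) < e"
      using Cauchy[OF \<open>e > 0\<close>] by blast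
    then show ?thesis
      using nn_integral_sq_dist_le_of_Cauchy[OF meas square_integrable lim] by blast
  qed
  obtain N where "(\<integral>\<^sup>+\<omega>. ennreal ((cmod (u N \<omega> - v \<omega>))\<^sup>2) \<partial>M) \<le> ennreal 1"
    using close[OF zero_less_one] by blast
  then have "(\<integral>\<^sup>+\<omega>. ennreal ((cmod (u N \<omega> - v \<omega>))\<^sup>2) \<partial>M) < \<infinity>"
    by (rule le_less_trans) simp
  then have "integrable M (\<lambda>\<omega>. (cmod (u N \<omega> - v \<omega>))\<^sup>2)"
    by (simp add: square_integrable_iff_nn_integral_finite)
  from square_integrable_lincomb[OF meas _ square_integrable this, of 1 N "-1"]
  show v_square_integrable: "integrable M (\<lambda>\<omega>. (cmod (v \<omega>))\<^sup>2)"
    by simp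
  have dist_eq: "(\<integral>\<^sup>+\<omega>. ennreal ((cmod (u n \<omega> - v \<omega>))\<^sup>2) \<partial>M) = ennreal (\<integral>\<omega>. (cmod (u n \<omega> - v \<omega>))\<^sup>2 \<partial>M)"
    for n
    using square_integrable_lincomb[OF meas v_meas square_integrable v_square_integrable, of 1 n "-1"]
    by (intro nn_integral_eq_integral) auto
  show "(\<lambda>n. \<integral>\<omega>. (cmod (u n \<omega> - v \<omega>))\<^sup>2 \<partial>M) \<longlonglongrightarrow> 0"
  proof (rule LIMSEQ_I)
    fix r :: real
    assume "0 < r"
    then obtain N where N: "\<And>n. n \<ge> N \<Longrightarrow> ennreal (\<integral>\<omega>. (cmod (u n \<omega> - v \<omega>))\<^sup>2 \<partial>M) \<le> ennreal (r / 2)"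
      using close[of "r / 2"] unfolding dist_eq by auto
    have "norm ((\<integral>\<omega>. (cmod (u n \<omega> - v \<omega>))\<^sup>2 \<partial>M) - 0) < r" if "n \<ge> N" for n
      using N[OF that] \<open>0 < r\<close> by (simp add: ennreal_le_iff)
    then show "\<exists>N. \<forall>n\<ge>N. norm ((\<integral>\<omega>. (cmod (u n \<omega> - v \<omega>))\<^sup>2 \<partial>M) - 0) < r"
      by blast
  qed
qed

lemma conj_dual_lincomb:
  assumes "f \<in> conj_dual sc" "g \<in> conj_dual sc"
  shows "(\<lambda>x. a * f x + b * g x) \<in> conj_dual sc"
proof -
  obtain K L where K: "\<And>x. cmod (f x) \<le> K * norm x" and L: "\<And>x. cmod (g x) \<le> L * norm x"
    using assms unfolding conj_dual_def by blast
  have "cmod (a * f x + b * g x) \<le> (cmod a * K + cmod b * L) * norm x" for x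
  proof -
    have "cmod (a * f x + b * g x) \<le> cmod a * cmod (f x) + cmod b * cmod (g x)"
      by (metis norm_mult norm_triangle_ineq)
    also have "\<dots> \<le> cmod a * (K * norm x) + cmod b * (L * norm x)"
      by (intro add_mono mult_left_mono K L) auto
    finally show ?thesis
      by (simp add: algebra_simps)
  qed
  then have "\<exists>M. \<forall>x. cmod (a * f x + b * g x) \<le> M * norm x"
    by blast
  with assms show ?thesis
    unfolding conj_dual_def by (auto simp: distrib_left)
qed

lemma conj_dual_scaleR:
  assumes "complex_scaling sc" "h \<in> conj_dual sc"
  shows "h (r *\<^sub>R x) = of_real r * h x"
proof -
  have "r *\<^sub>R x = sc (of_real r) x"
    using assms(1) unfolding complex_scaling_def by simp
  then show ?thesis
    using assms(2) unfolding conj_dual_def by simp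
qed

lemma conj_dual_le_dual_norm:
  assumes sc: "complex_scaling sc" and h: "h \<in> conj_dual sc"
  shows "cmod (h x) \<le> dual_norm h * norm x"
proof (cases "x = 0")
  case True
  then show ?thesis
    using conj_dual_scaleR[OF sc h, of 0 0] by simp
next
  case False
  obtain K where K: "\<And>x. cmod (h x) \<le> K * norm x"
    using h unfolding conj_dual_def by blast
  have "bdd_above ((\<lambda>y. cmod (h y)) ` {y. norm y \<le> 1})"
  proof (rule bdd_aboveI2)
    fix y :: 'a
    assume "y \<in> {y. norm y \<le> 1}"
    then have "K * norm y \<le> max K 0"
      by (metis max.cobounded1 max.cobounded2 mem_Collect_eq mult_left_le mult_right_mono norm_ge_zero order.trans)
    then show "cmod (h y) \<le> max K 0"
      using K[of y] by linarith
  qed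
  then have "cmod (h ((1 / norm x) *\<^sub>R x)) \<le> dual_norm h"
    unfolding dual_norm_def by (rule cSUP_upper[rotated]) simp
  then show ?thesis
    using False by (simp add: conj_dual_scaleR[OF sc h] norm_mult norm_divide divide_le_eq)
qed

lemma conj_dual_tendsto_pointwise:
  assumes sc: "complex_scaling sc" and F: "\<And>n. F n \<in> conj_dual sc" and f: "f \<in> conj_dual sc"
    and lim: "(\<lambda>n. dual_norm (\<lambda>x. F n x - f x)) \<longlonglongrightarrow> 0"
  shows "(\<lambda>n. F n x) \<longlonglongrightarrow> f x"
proof -
  have "(\<lambda>n. F n x - f x) \<longlonglongrightarrow> 0"
  proof (rule Lim_null_comparison)
    show "\<forall>\<^sub>F n in sequentially. norm (F n x - f x) \<le> dual_norm (\<lambda>x. F n x - f x) * norm x"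
      using conj_dual_le_dual_norm[OF sc conj_dual_lincomb[OF F f, of 1 _ "-1"]] by simp
    show "(\<lambda>n. dual_norm (\<lambda>x. F n x - f x) * norm x) \<longlonglongrightarrow> 0"
      using tendsto_mult[OF lim tendsto_const[of "norm x"]] by simp
  qed
  then show ?thesis
    by (rule LIM_zero_cancel)
qed

definition second_moment_form ::
    "'w measure \<Rightarrow> ('w \<Rightarrow> 'a) \<Rightarrow> ('a \<Rightarrow> complex) \<Rightarrow> ('a \<Rightarrow> complex) \<Rightarrow> complex" where
  "second_moment_form M \<xi> f g = (\<integral>\<omega>. f (\<xi> \<omega>) * cnj (g (\<xi> \<omega>)) \<partial>M)"

definition square_integrable_dual ::
    "(complex \<Rightarrow> 'a::real_normed_vector \<Rightarrow> 'a) \<Rightarrow> 'w measure \<Rightarrow> ('w \<Rightarrow> 'a) \<Rightarrow> ('a \<Rightarrow> complex) set" where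
  "square_integrable_dual sc M \<xi> = {f \<in> conj_dual sc. integrable M (\<lambda>\<omega>. (cmod (f (\<xi> \<omega>)))\<^sup>2)}"

lemma second_moment_form_diag:
  "second_moment_form M \<xi> h h = of_real (\<integral>\<omega>. (cmod (h (\<xi> \<omega>)))\<^sup>2 \<partial>M)"
  unfolding second_moment_form_def complex_norm_square[symmetric] by (rule integral_complex_of_real)

lemma positive_form_second_moment_form: "positive_form D (second_moment_form M \<xi>)"
  by (simp add: positive_form_def second_moment_form_diag)

lemma sesquilinear_on_second_moment_form:
  assumes meas: "\<And>f. f \<in> conj_dual sc \<Longrightarrow> (\<lambda>\<omega>. f (\<xi> \<omega>)) \<in> borel_measurable M"
  shows "sesquilinear_on (square_integrable_dual sc M \<xi>) (second_moment_form M \<xi>)"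
proof -
  let ?D = "square_integrable_dual sc M \<xi>"
  have lincomb: "(\<lambda>x. a * f x + b * g x) \<in> ?D" if "f \<in> ?D" "g \<in> ?D" for a b f g
    using that conj_dual_lincomb square_integrable_lincomb[OF meas meas]
    unfolding square_integrable_dual_def by auto
  have int: "integrable M (\<lambda>\<omega>. f (\<xi> \<omega>) * cnj (g (\<xi> \<omega>)))" if "f \<in> ?D" "g \<in> ?D" for f g
    using that integrable_mult_cnj[OF meas meas] unfolding square_integrable_dual_def by auto
  show ?thesis
    unfolding sesquilinear_on_def
  proof (intro conjI ballI allI)
    fix a b f g h
    assume fgh: "f \<in> ?D" "g \<in> ?D" "h \<in> ?D"
    show "second_moment_form M \<xi> (\<lambda>x. a * f x + b * g x) h =
        a * second_moment_form M \<xi> f h + b * second_moment_form M \<xi> g h"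
      unfolding second_moment_form_def using int[OF fgh(1,3)] int[OF fgh(2,3)]
      by (simp add: distrib_right mult.assoc)
    show "second_moment_form M \<xi> h (\<lambda>x. a * f x + b * g x) =
        cnj a * second_moment_form M \<xi> h f + cnj b * second_moment_form M \<xi> h g"
      unfolding second_moment_form_def using int[OF fgh(3,1)] int[OF fgh(3,2)]
      by (simp add: distrib_left mult.left_commute)
  qed (use lincomb in auto)
qed

lemma closed_form_second_moment_form:
  assumes sc: "complex_scaling sc"
    and meas: "\<And>f. f \<in> conj_dual sc \<Longrightarrow> (\<lambda>\<omega>. f (\<xi> \<omega>)) \<in> borel_measurable M"
  shows "closed_form sc (square_integrable_dual sc M \<xi>) (second_moment_form M \<xi>)"
  unfolding closed_form_def
proof (intro allI impI, elim conjE)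
  fix F f
  assume FD: "\<forall>n. F n \<in> square_integrable_dual sc M \<xi>" and f: "f \<in> conj_dual sc"
    and lim: "(\<lambda>n. dual_norm (\<lambda>x. F n x - f x)) \<longlonglongrightarrow> 0"
    and Cauchy: "\<forall>e>0. \<exists>N. \<forall>n\<ge>N. \<forall>m\<ge>N.
      cmod (second_moment_form M \<xi> (\<lambda>x. F n x - F m x) (\<lambda>x. F n x - F m x)) < e"
  have F: "F n \<in> conj_dual sc" and F_square_integrable: "integrable M (\<lambda>\<omega>. (cmod (F n (\<xi> \<omega>)))\<^sup>2)" for n
    using FD unfolding square_integrable_dual_def by auto
  have "\<exists>N. \<forall>n\<ge>N. \<forall>m\<ge>N. (\<integral>\<omega>. (cmod (F n (\<xi> \<omega>) - F m (\<xi> \<omega>)))\<^sup>2 \<partial>M) < e" if "e > 0" for e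
    using Cauchy that by (simp add: second_moment_form_diag)
  note L2_limit = square_integrable_Cauchy_tendsto[where u="\<lambda>n \<omega>. F n (\<xi> \<omega>)" and v="\<lambda>\<omega>. f (\<xi> \<omega>)",
      OF meas[OF F] F_square_integrable conj_dual_tendsto_pointwise[OF sc F f lim] this]
  show "f \<in> square_integrable_dual sc M \<xi> \<and>
      (\<lambda>n. second_moment_form M \<xi> (\<lambda>x. F n x - f x) (\<lambda>x. F n x - f x)) \<longlonglongrightarrow> 0"
    using L2_limit(1) tendsto_of_real[OF L2_limit(2)] f
    by (simp add: square_integrable_dual_def second_moment_form_diag)
qed

theorem theorem7:
  fixes sc :: "complex \<Rightarrow> 'a::banach \<Rightarrow> 'a"
    and M :: "'w measure"
    and \<xi> :: "'w \<Rightarrow> 'a"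
    and D :: "('a \<Rightarrow> complex) set"
    and t :: "('a \<Rightarrow> complex) \<Rightarrow> ('a \<Rightarrow> complex) \<Rightarrow> complex"
  assumes cplx: "complex_scaling sc"
    and refl: "reflexive_space sc"
    and prob: "prob_space M"
    and weakly_meas: "\<forall>f\<in>conj_dual sc. (\<lambda>\<omega>. f (\<xi> \<omega>)) \<in> borel_measurable M"
    and pettis_zero: "\<forall>f\<in>conj_dual sc. integrable M (\<lambda>\<omega>. f (\<xi> \<omega>)) \<and>
                        (\<integral>\<omega>. f (\<xi> \<omega>) \<partial>M) = 0"
    and D_def: "D = {f\<in>conj_dual sc. (\<integral>\<^sup>+\<omega>. ennreal ((cmod (f (\<xi> \<omega>)))\<^sup>2) \<partial>M) < \<infinity>}"
    and dense: "\<forall>f\<in>conj_dual sc. \<forall>e>0. \<exists>g\<in>D. dual_norm (\<lambda>x. f x - g x) < e"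
    and t_def: "t = (\<lambda>f g. \<integral>\<omega>. f (\<xi> \<omega>) * cnj (g (\<xi> \<omega>)) \<partial>M)"
  shows "positive_form D t \<and> closed_form sc D t \<and> sesquilinear_on D t"
proof -
  have meas: "\<And>f. f \<in> conj_dual sc \<Longrightarrow> (\<lambda>\<omega>. f (\<xi> \<omega>)) \<in> borel_measurable M"
    using weakly_meas by blast
  have "D = square_integrable_dual sc M \<xi>"
    unfolding D_def square_integrable_dual_def
    using square_integrable_iff_nn_integral_finite[OF meas] by blast
  moreover have "t = second_moment_form M \<xi>"
    unfolding t_def second_moment_form_def by blast
  ultimately show ?thesis
    using positive_form_second_moment_form closed_form_second_moment_form[where \<xi>=\<xi> and M=M, OF cplx meas]
      sesquilinear_on_second_moment_form[where sc=sc and \<xi>=\<xi> and M=M, OF meas]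
    by simp
qed

end
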